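(* Let $2 \leq d \leq k$ be integers, let $\Sigma_k=\{\sigma_1,\ldots,\sigma_k\}$ and $\Sigma_d=\{\sigma_1,\ldots,\sigma_d\}$. Consider two users over the alphabet $\Sigma_k$, where user 1 has confusion graph $G_1=(\Sigma_k,\{ab \mid a\in\Sigma_k,\ b\in\Sigma_k\setminus\Sigma_d,\ a\neq b\})$ (the complete graph on $\Sigma_k$ minus a clique on $\Sigma_d$) and user 2 has the empty confusion graph $G_2=(\Sigma_k,\emptyset)$. Then for every $\alpha\in[0,1]$ the rate vector $(\alpha\log_2 d,\ (1-\alpha)\log_2 k)$ is optimal.
   Context: Setting: a sender broadcasts a word of length $n$ over a finite alphabet $\Sigma$ to $r$ users; user $i$ has a confusion graph $G_i$ on vertex set $\Sigma$, where $ab$ is an edge iff user $i$ cannot distinguish letters $a$ and $b$. Two words $x,y\in\Sigma^n$ are distinguishable by user $i$ if there is a coordinate $t$ with $x_t\neq y_t$ and $x_ty_t$ not an edge of $G_i$. A vector $(m_1,\ldots,m_r)$ of positive integers is feasible for length $n$ if there is a map $E:[m_1]\times\cdots\times[m_r]\to\Sigma^n$ such that for every $i$ and all tuples $a,a'$ with $a_i\neq a'_i$, the words $E(a)$ and $E(a')$ are distinguishable by user $i$ (so user $i$ can decode his message $a_i$). A rate vector $(R_1,\ldots,R_r)$ is feasible if there is a sequence of feasible vectors $(m_1^{(n)},\ldots,m_r^{(n)})$ for lengths $n\to\infty$ with $R_i=\lim_{n\to\infty}\frac{\log_2 m_i^{(n)}}{n}$ for all $i$. For two users, a rate vector is optimal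 if it is feasible and no user can increase his rate while the other user keeps the same rate (i.e. no feasible $(R_1',R_2)$ with $R_1'>R_1$ and no feasible $(R_1,R_2')$ with $R_2'>R_2$). *)

theory Defs
  imports "HOL-Analysis.Analysis"
begin

text \<open>Confusion graphs are symmetric relations on the alphabet: G a b means that
  the letters a and b cannot be distinguished. Users are indexed by 0,...,r-1.\<close>

definition words :: "'a set \<Rightarrow> nat \<Rightarrow> 'a list set" where
  "words \<Sigma> n = {x. length x = n \<and> set x \<subseteq> \<Sigma>}"

definition distinguishable :: "('a \<Rightarrow> 'a \<Rightarrow> bool) \<Rightarrow> 'a list \<Rightarrow> 'a list \<Rightarrow> bool" where
  "distinguishable G x y \<longleftrightarrow>
     (\<exists>t < min (length x) (length y). x ! t \<noteq> y ! t \<and> \<not> G (x ! t) (y ! t))"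

definition feasible_vec ::
  "'a set \<Rightarrow> (nat \<Rightarrow> 'a \<Rightarrow> 'a \<Rightarrow> bool) \<Rightarrow> nat \<Rightarrow> nat \<Rightarrow> (nat \<Rightarrow> nat) \<Rightarrow> bool" where
  "feasible_vec \<Sigma> G r n m \<longleftrightarrow>
     (\<forall>i<r. 0 < m i) \<and>
     (\<exists>E :: (nat \<Rightarrow> nat) \<Rightarrow> 'a list.
        (\<forall>a \<in> (\<Pi>\<^sub>E i\<in>{..<r}. {..<m i}). E a \<in> words \<Sigma> n) \<and>
        (\<forall>i<r. \<forall>a \<in> (\<Pi>\<^sub>E i\<in>{..<r}. {..<m i}). \<forall>a' \<in> (\<Pi>\<^sub>E i\<in>{..<r}. {..<m i}).
            a i \<noteq> a' i \<longrightarrow> distinguishable (G i) (E a) (E a')))"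

definition feasible_rate ::
  "'a set \<Rightarrow> (nat \<Rightarrow> 'a \<Rightarrow> 'a \<Rightarrow> bool) \<Rightarrow> nat \<Rightarrow> (nat \<Rightarrow> real) \<Rightarrow> bool" where
  "feasible_rate \<Sigma> G r R \<longleftrightarrow>
     (\<exists>(len :: nat \<Rightarrow> nat) (M :: nat \<Rightarrow> nat \<Rightarrow> nat).
        filterlim len at_top sequentially \<and>
        (\<forall>j. feasible_vec \<Sigma> G r (len j) (M j)) \<and>
        (\<forall>i<r. (\<lambda>j. log 2 (real (M j i)) / real (len j)) \<longlonglongrightarrow> R i))"

definition feasible_rate2 ::
  "'a set \<Rightarrow> ('a \<Rightarrow> 'a \<Rightarrow> bool) \<Rightarrow> ('a \<Rightarrow> 'a \<Rightarrow> bool) \<Rightarrow> real \<Rightarrow> real \<Rightarrow> bool" where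
  "feasible_rate2 \<Sigma> G1 G2 R1 R2 \<longleftrightarrow>
     feasible_rate \<Sigma> (\<lambda>i. if i = 0 then G1 else G2) 2 (\<lambda>i. if i = 0 then R1 else R2)"

definition optimal2 ::
  "'a set \<Rightarrow> ('a \<Rightarrow> 'a \<Rightarrow> bool) \<Rightarrow> ('a \<Rightarrow> 'a \<Rightarrow> bool) \<Rightarrow> real \<Rightarrow> real \<Rightarrow> bool" where
  "optimal2 \<Sigma> G1 G2 R1 R2 \<longleftrightarrow>
     feasible_rate2 \<Sigma> G1 G2 R1 R2 \<and>
     \<not> (\<exists>R1'. R1' > R1 \<and> feasible_rate2 \<Sigma> G1 G2 R1' R2) \<and>
     \<not> (\<exists>R2'. R2' > R2 \<and> feasible_rate2 \<Sigma> G1 G2 R1 R2')"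

end

theory Submission
  imports Defs
begin

text \<open>Let \<open>g = log d k\<close>, so \<open>d powr g = k\<close>. Letters outside \<open>\<Sigma>\<^sub>d\<close> are confusable by user 1
  with every other letter, so user 1 effectively sees a word only through its \<open>\<Sigma>\<^sub>d\<close>-shadow: the
  words over \<open>\<Sigma>\<^sub>d\<close> obtained by filling each such position arbitrarily. A convexity argument,
  by induction on the length, shows that any set \<open>W\<close> of words over \<open>\<Sigma>\<^sub>k\<close> has at most
  \<open>|shadow W| powr g\<close> elements. The codewords carrying a fixed message of user 1 form a set of
  size \<open>m\<^sub>2\<close>, and the shadows of these sets are pairwise disjoint, whence
  \<open>m\<^sub>1 \<cdot> m\<^sub>2 powr (1/g) \<le> d\<^sup>n\<close>, i.e. \<open>R\<^sub>1 + R\<^sub>2 / g \<le> log d\<close> for every feasible rate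
  vector. Time sharing between \<open>\<Sigma>\<^sub>d\<close>-words for user 1 and \<open>\<Sigma>\<^sub>k\<close>-words for user 2 attains
  this line, so all its points are optimal.\<close>

section \<open>A convexity inequality\<close>

lemma powr_add_diff_mono:
  fixes a b w g :: real
  assumes "0 \<le> a" "a \<le> b" "0 \<le> w" "1 \<le> g"
  shows "(a + w) powr g - a powr g \<le> (b + w) powr g - b powr g"
proof (rule DERIV_nonneg_imp_increasing_open[OF assms(2)])
  fix x assume x: "a < x" "x < b"
  hence "0 < x" using assms by simp
  have "DERIV (\<lambda>s. (s + w) powr g - s powr g) x :> g * (x + w) powr (g - 1) * 1 - g * x powr (g - 1)"
    using \<open>0 < x\<close> assms by (auto intro!: derivative_eq_intros)
  moreover have "x powr (g - 1) \<le> (x + w) powr (g - 1)"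
    using \<open>0 < x\<close> assms by (intro powr_mono2) auto
  hence "0 \<le> g * (x + w) powr (g - 1) * 1 - g * x powr (g - 1)"
    using assms by (simp add: algebra_simps mult_left_mono)
  ultimately show "\<exists>y. DERIV (\<lambda>s. (s + w) powr g - s powr g) x :> y \<and> 0 \<le> y" by blast
next
  show "continuous_on {a..b} (\<lambda>s. (s + w) powr g - s powr g)"
    using assms by (intro continuous_intros continuous_on_powr') auto
qed

lemma sum_powr_diff_le:
  fixes v :: "'c \<Rightarrow> real" and m g s :: real
  assumes "finite C" "\<forall>c\<in>C. m \<le> v c" "0 \<le> m" "1 \<le> g" "m \<le> s"
  shows "(\<Sum>c\<in>C. v c powr g - m powr g) \<le> (s + (\<Sum>c\<in>C. v c - m)) powr g - s powr g"
  using assms(1,2,5)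
proof (induction C arbitrary: s rule: finite_induct)
  case empty
  then show ?case by simp
next
  case (insert c C)
  have "(\<Sum>c\<in>C. v c powr g - m powr g)
        \<le> ((s + (v c - m)) + (\<Sum>c\<in>C. v c - m)) powr g - (s + (v c - m)) powr g"
    using insert by auto
  moreover have "(m + (v c - m)) powr g - m powr g \<le> (s + (v c - m)) powr g - s powr g"
    using powr_add_diff_mono[of m s "v c - m" g] assms insert by simp
  ultimately show ?case
    using insert by (simp add: algebra_simps)
qed

lemma sum_powr_le_powr_sum:
  fixes v :: "'c \<Rightarrow> real" and m g :: real
  assumes "finite C" "\<forall>c\<in>C. m \<le> v c" "0 \<le> m" "1 \<le> g"
  shows "(\<Sum>c\<in>C. v c powr g) + (real (card C) powr g - real (card C)) * m powr g
         \<le> (\<Sum>c\<in>C. v c) powr g"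
proof (cases "C = {}")
  case False
  have "m \<le> real (card C) * m"
    using assms(1,3) False by (simp add: mult_le_cancel_right1 Suc_le_eq card_gt_0_iff)
  from sum_powr_diff_le[OF assms this]
  have "(\<Sum>c\<in>C. v c powr g) - real (card C) * m powr g
        \<le> (real (card C) * m + ((\<Sum>c\<in>C. v c) - real (card C) * m)) powr g
           - (real (card C) * m) powr g"
    by (simp add: sum_subtractf)
  then show ?thesis
    using assms(3) by (simp add: powr_mult algebra_simps)
qed simp

section \<open>Shadows\<close>

definition shadow :: "nat \<Rightarrow> nat \<Rightarrow> nat list set \<Rightarrow> nat list set" where
  "shadow d n W = {z \<in> words {0..<d} n. \<exists>x\<in>W. \<forall>t<n. x ! t < d \<longrightarrow> z ! t = x ! t}"

definition tails :: "'a list set \<Rightarrow> 'a \<Rightarrow> 'a list set" where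
  "tails W c = {x. c # x \<in> W}"

lemma finite_words: "finite \<Sigma> \<Longrightarrow> finite (words \<Sigma> n)"
  unfolding words_def using finite_lists_length_eq[of \<Sigma> n] by (simp add: conj_commute)

lemma card_words: "finite \<Sigma> \<Longrightarrow> card (words \<Sigma> n) = card \<Sigma> ^ n"
  unfolding words_def using card_lists_length_eq[of \<Sigma> n] by (simp add: conj_commute)

lemma Cons_in_words_iff [simp]: "c # x \<in> words \<Sigma> (Suc n) \<longleftrightarrow> c \<in> \<Sigma> \<and> x \<in> words \<Sigma> n"
  by (auto simp: words_def)

lemma words_SucE:
  assumes "z \<in> words \<Sigma> (Suc n)"
  obtains c x where "z = c # x" "c \<in> \<Sigma>" "x \<in> words \<Sigma> n"
  using assms by (cases z) (auto simp: words_def)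

lemma words_nth_mem: "x \<in> words \<Sigma> n \<Longrightarrow> t < n \<Longrightarrow> x ! t \<in> \<Sigma>"
  unfolding words_def by auto

lemma words_mono: "\<Sigma> \<subseteq> \<Sigma>' \<Longrightarrow> words \<Sigma> n \<subseteq> words \<Sigma>' n"
  unfolding words_def by auto

lemma tails_subset_words: "W \<subseteq> words \<Sigma> (Suc n) \<Longrightarrow> tails W c \<subseteq> words \<Sigma> n"
  unfolding tails_def by auto

lemma shadow_subset_words: "shadow d n W \<subseteq> words {0..<d} n"
  unfolding shadow_def by auto

lemma finite_shadow: "finite (shadow d n W)"
  using finite_subset[OF shadow_subset_words finite_words] by blast

text \<open>A word of \<open>W\<close> starting with a letter outside \<open>\<Sigma>\<^sub>d\<close> shadows words with any first letter
  \<open>c < d\<close>, so these wildcard tails are added to every \<open>tails W c\<close>.\<close>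

lemma shadow_Suc:
  assumes "W \<subseteq> words {0..<k} (Suc n)" "d \<le> k"
  shows "shadow d (Suc n) W
         = (\<Union>c<d. (#) c ` shadow d n (tails W c \<union> (\<Union>c'\<in>{d..<k}. tails W c')))"
    (is "_ = (\<Union>c<d. (#) c ` shadow d n (?T c))")
proof (intro equalityI subsetI)
  fix z assume "z \<in> shadow d (Suc n) W"
  then obtain x where x: "x \<in> W" "\<forall>t<Suc n. x ! t < d \<longrightarrow> z ! t = x ! t"
    and z: "z \<in> words {0..<d} (Suc n)"
    unfolding shadow_def by blast
  obtain c z' where z': "z = c # z'" "c < d" "z' \<in> words {0..<d} n"
    using z by (elim words_SucE) auto
  have "x \<in> words {0..<k} (Suc n)"
    using x(1) assms(1) by blast
  then obtain c' x' where x': "x = c' # x'" "c' < k"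
    by (elim words_SucE) auto
  have "x' \<in> ?T c"
    using x x' z' by (cases "c' < d") (force simp: tails_def)+
  moreover have "\<forall>t<n. x' ! t < d \<longrightarrow> z' ! t = x' ! t"
    using x(2) z' x' by auto
  ultimately show "z \<in> (\<Union>c<d. (#) c ` shadow d n (?T c))"
    using z' unfolding shadow_def by blast
next
  fix z assume "z \<in> (\<Union>c<d. (#) c ` shadow d n (?T c))"
  then obtain c z' x' where z: "c < d" "z = c # z'" "z' \<in> words {0..<d} n"
    and x': "x' \<in> ?T c" "\<forall>t<n. x' ! t < d \<longrightarrow> z' ! t = x' ! t"
    unfolding shadow_def by blast
  then obtain c' where "c' # x' \<in> W" "c' = c \<or> d \<le> c'"
    unfolding tails_def by auto
  moreover have "\<forall>t<Suc n. (c' # x') ! t < d \<longrightarrow> z ! t = (c' # x') ! t"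
    if "c' = c \<or> d \<le> c'"
    using x'(2) z that by (auto simp: less_Suc_eq_0_disj)
  ultimately show "z \<in> shadow d (Suc n) W"
    using z unfolding shadow_def by auto
qed

lemma card_shadow_Suc:
  assumes "W \<subseteq> words {0..<k} (Suc n)" "d \<le> k"
  shows "card (shadow d (Suc n) W)
         = (\<Sum>c<d. card (shadow d n (tails W c \<union> (\<Union>c'\<in>{d..<k}. tails W c'))))"
  unfolding shadow_Suc[OF assms]
  by (subst card_UN_disjoint) (auto simp: finite_shadow card_image)

lemma card_le_sum_tails:
  assumes W: "W \<subseteq> words {0..<k} (Suc n)" and "d \<le> k"
  shows "card W \<le> (\<Sum>c<d. card (tails W c)) + (k - d) * card (\<Union>c'\<in>{d..<k}. tails W c')"
proof -
  let ?H = "\<Union>c'\<in>{d..<k}. tails W c'"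
  have finite_tails: "finite (tails W c)" for c
    using finite_subset[OF tails_subset_words[OF W] finite_words] by blast
  have "W \<subseteq> (\<Union>c<k. (#) c ` tails W c)"
  proof
    fix x assume "x \<in> W"
    with W have "x \<in> words {0..<k} (Suc n)" by blast
    then obtain c x' where "x = c # x'" "c < k"
      by (elim words_SucE) auto
    with \<open>x \<in> W\<close> show "x \<in> (\<Union>c<k. (#) c ` tails W c)"
      by (auto simp: tails_def)
  qed
  then have "card W \<le> card (\<Union>c<k. (#) c ` tails W c)"
    by (rule card_mono[rotated]) (auto simp: finite_tails)
  also have "\<dots> \<le> (\<Sum>c<k. card (tails W c))"
    using card_UN_le[of "{..<k}" "\<lambda>c. (#) c ` tails W c"] by (simp add: card_image)
  also have "\<dots> = (\<Sum>c<d. card (tails W c)) + (\<Sum>c\<in>{d..<k}. card (tails W c))"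
    using \<open>d \<le> k\<close> by (metis atLeast0LessThan sum.atLeastLessThan_concat zero_le)
  also have "(\<Sum>c\<in>{d..<k}. card (tails W c)) \<le> (\<Sum>c\<in>{d..<k}. card ?H)"
    by (intro sum_mono card_mono) (auto simp: finite_tails)
  finally show ?thesis by simp
qed

lemma card_le_card_shadow_powr:
  fixes g :: real
  assumes "1 \<le> d" "d \<le> k" "1 \<le> g" "real d powr g = real k"
    and "W \<subseteq> words {0..<k} n"
  shows "real (card W) \<le> real (card (shadow d n W)) powr g"
  using assms(5)
proof (induction n arbitrary: W)
  case 0
  then consider "W = {}" | "W = {[]}"
    by (auto simp: words_def)
  moreover have "shadow d 0 {[]} = {[]}"
    by (auto simp: shadow_def words_def)
  ultimately show ?case
    by cases simp_all
next
  case (Suc n)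
  define H where "H = (\<Union>c'\<in>{d..<k}. tails W c')"
  have tails_words: "tails W c \<subseteq> words {0..<k} n" for c
    by (rule tails_subset_words[OF Suc.prems])
  then have H_words: "H \<subseteq> words {0..<k} n"
    unfolding H_def by auto
  have finite_words_k: "finite (words {0..<k} n)"
    by (simp add: finite_words)
  define u where "u c = real (card (shadow d n (tails W c \<union> H)))" for c
  have IH: "real (card X) \<le> u c powr g" if "X \<subseteq> tails W c \<union> H" for X c
  proof -
    have "card X \<le> card (tails W c \<union> H)"
      using that tails_words H_words finite_words_k by (intro card_mono) (auto intro: finite_subset)
    then show ?thesis
      unfolding u_def using Suc.IH[of "tails W c \<union> H"] tails_words H_words by fastforce
  qed
  text \<open>The common lower bound for the \<open>u c\<close> needed by the convexity inequality comes from \<open>H\<close>.\<close>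
  define m where "m = real (card H) powr (1 / g)"
  have m_powr: "m powr g = real (card H)"
    unfolding m_def using assms(3) by (simp add: powr_powr)
  have m_le: "m \<le> u c" for c
  proof -
    have "m \<le> (u c powr g) powr (1 / g)"
      unfolding m_def using IH[of H c] assms(3) by (intro powr_mono2) auto
    then show ?thesis
      using assms(3) by (simp add: powr_powr u_def)
  qed
  have "real (card W) \<le> real ((\<Sum>c<d. card (tails W c)) + (k - d) * card H)"
    using card_le_sum_tails[OF Suc.prems assms(2)] unfolding H_def of_nat_le_iff .
  also have "\<dots> = (\<Sum>c<d. real (card (tails W c))) + (real k - real d) * real (card H)"
    using assms(2) by (simp add: of_nat_diff)
  also have "\<dots> \<le> (\<Sum>c<d. u c powr g) + (real k - real d) * m powr g"
    using IH m_powr by (auto intro!: sum_mono)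
  also have "\<dots> \<le> (\<Sum>c<d. u c) powr g"
    using sum_powr_le_powr_sum[of "{..<d}" m u g] m_le assms(3,4) m_def by simp
  also have "(\<Sum>c<d. u c) = real (card (shadow d (Suc n) W))"
    unfolding card_shadow_Suc[OF Suc.prems assms(2)] u_def H_def by simp
  finally show ?case .
qed

section \<open>Codes for two users\<close>

lemma feasible_vec_2I:
  fixes E :: "nat \<Rightarrow> nat \<Rightarrow> 'a list"
  assumes "0 < m 0" "0 < m 1" "\<And>a b. a < m 0 \<Longrightarrow> b < m 1 \<Longrightarrow> E a b \<in> words \<Sigma> n"
    and "\<And>a a' b b'. a < m 0 \<Longrightarrow> a' < m 0 \<Longrightarrow> b < m 1 \<Longrightarrow> b' < m 1 \<Longrightarrow> a \<noteq> a' \<Longrightarrow>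
           distinguishable (G 0) (E a b) (E a' b')"
    and "\<And>a a' b b'. a < m 0 \<Longrightarrow> a' < m 0 \<Longrightarrow> b < m 1 \<Longrightarrow> b' < m 1 \<Longrightarrow> b \<noteq> b' \<Longrightarrow>
           distinguishable (G 1) (E a b) (E a' b')"
  shows "feasible_vec \<Sigma> G 2 n m"
  unfolding feasible_vec_def
  using assms by (intro conjI exI[of _ "\<lambda>a. E (a 0) (a 1)"]) (auto simp: less_2_cases_iff PiE_iff)

lemma feasible_vec_2E:
  assumes "feasible_vec \<Sigma> G 2 n m"
  obtains E :: "nat \<Rightarrow> nat \<Rightarrow> 'a list"
  where "0 < m 0" "0 < m 1" "\<And>a b. a < m 0 \<Longrightarrow> b < m 1 \<Longrightarrow> E a b \<in> words \<Sigma> n"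
    and "\<And>a a' b b'. a < m 0 \<Longrightarrow> a' < m 0 \<Longrightarrow> b < m 1 \<Longrightarrow> b' < m 1 \<Longrightarrow> a \<noteq> a' \<Longrightarrow>
           distinguishable (G 0) (E a b) (E a' b')"
    and "\<And>a a' b b'. a < m 0 \<Longrightarrow> a' < m 0 \<Longrightarrow> b < m 1 \<Longrightarrow> b' < m 1 \<Longrightarrow> b \<noteq> b' \<Longrightarrow>
           distinguishable (G 1) (E a b) (E a' b')"
proof -
  let ?P = "\<Pi>\<^sub>E i\<in>{..<2}. {..<m i}"
  define pair where "pair a b = (\<lambda>i\<in>{..<2::nat}. if i = 0 then a else b)" for a b :: nat
  have pair_mem: "pair a b \<in> ?P" if "a < m 0" "b < m 1" for a b
    using that by (auto simp: pair_def less_2_cases_iff)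
  have pair_simps [simp]: "pair a b 0 = a" "pair a b (Suc 0) = b" for a b
    by (simp_all add: pair_def)
  from assms obtain E where E_words: "\<forall>a\<in>?P. E a \<in> words \<Sigma> n"
    and E_dist: "\<forall>i<2. \<forall>a\<in>?P. \<forall>a'\<in>?P. a i \<noteq> a' i \<longrightarrow> distinguishable (G i) (E a) (E a')"
    and pos: "\<forall>i<2. 0 < m i"
    unfolding feasible_vec_def by (elim conjE exE)
  show thesis
  proof (rule that[of "\<lambda>a b. E (pair a b)"])
    show "0 < m 0" "0 < m 1"
      using pos by simp_all
    show "E (pair a b) \<in> words \<Sigma> n" if "a < m 0" "b < m 1" for a b
      using E_words pair_mem[OF that] by blast
    show "distinguishable (G 0) (E (pair a b)) (E (pair a' b'))"
      if "a < m 0" "a' < m 0" "b < m 1" "b' < m 1" "a \<noteq> a'" for a a' b b'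
      by (rule E_dist[rule_format, OF _ pair_mem pair_mem]) (use that in simp_all)
    show "distinguishable (G 1) (E (pair a b)) (E (pair a' b'))"
      if "a < m 0" "a' < m 0" "b < m 1" "b' < m 1" "b \<noteq> b'" for a a' b b'
      by (rule E_dist[rule_format, OF _ pair_mem pair_mem]) (use that in simp_all)
  qed
qed

lemma distinguishable_imp_neq: "distinguishable G x y \<Longrightarrow> x \<noteq> y"
  unfolding distinguishable_def by auto

lemma distinguishable_never_confused_iff:
  "length x = length y \<Longrightarrow> distinguishable (\<lambda>_ _. False) x y \<longleftrightarrow> x \<noteq> y"
  by (auto simp: distinguishable_def list_eq_iff_nth_eq)

lemma distinguishable_append_left:
  assumes "length x = length x'" "distinguishable G x x'"
  shows "distinguishable G (x @ y) (x' @ y')"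
  using assms by (fastforce simp: distinguishable_def nth_append)

lemma distinguishable_append_right:
  assumes "length x = length x'" "distinguishable G y y'"
  shows "distinguishable G (x @ y) (x' @ y')"
proof -
  obtain t where "t < min (length y) (length y')" "y ! t \<noteq> y' ! t" "\<not> G (y ! t) (y' ! t)"
    using assms(2) unfolding distinguishable_def by blast
  then show ?thesis
    using assms(1) unfolding distinguishable_def
    by (intro exI[of _ "length x + t"]) (simp add: nth_append)
qed

definition complete_minus_clique :: "nat \<Rightarrow> nat \<Rightarrow> nat \<Rightarrow> nat \<Rightarrow> bool" where
  "complete_minus_clique k d a b \<longleftrightarrow> a < k \<and> b < k \<and> a \<noteq> b \<and> (d \<le> a \<or> d \<le> b)"

lemma distinguishable_complete_minus_clique_iff:
  assumes "x \<in> words {0..<k} n" "y \<in> words {0..<k} n"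
  shows "distinguishable (complete_minus_clique k d) x y \<longleftrightarrow>
         (\<exists>t<n. x ! t \<noteq> y ! t \<and> x ! t < d \<and> y ! t < d)"
  using assms words_nth_mem[OF assms(1)] words_nth_mem[OF assms(2)]
  by (auto simp: distinguishable_def complete_minus_clique_def words_def)

lemma distinguishable_complete_minus_clique_if_neq:
  assumes "d \<le> k" "x \<in> words {0..<d} n" "y \<in> words {0..<d} n" "x \<noteq> y"
  shows "distinguishable (complete_minus_clique k d) x y"
proof -
  have "x \<in> words {0..<k} n" "y \<in> words {0..<k} n"
    using assms(1-3) words_mono[of "{0..<d}" "{0..<k}"] by auto
  moreover obtain t where "t < n" "x ! t \<noteq> y ! t"
    using assms(2-4) by (auto simp: words_def list_eq_iff_nth_eq)
  moreover have "x ! t < d" "y ! t < d" if "t < n" for t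
    using words_nth_mem[OF assms(2) that] words_nth_mem[OF assms(3) that] by auto
  ultimately show ?thesis
    using distinguishable_complete_minus_clique_iff by blast
qed

lemma shadows_disjoint:
  assumes "W \<subseteq> words {0..<k} n" "W' \<subseteq> words {0..<k} n"
    and "\<forall>x\<in>W. \<forall>y\<in>W'. distinguishable (complete_minus_clique k d) x y"
  shows "shadow d n W \<inter> shadow d n W' = {}"
proof (rule ccontr)
  assume "shadow d n W \<inter> shadow d n W' \<noteq> {}"
  then obtain z x y where x: "x \<in> W" "\<forall>t<n. x ! t < d \<longrightarrow> z ! t = x ! t"
    and y: "y \<in> W'" "\<forall>t<n. y ! t < d \<longrightarrow> z ! t = y ! t"
    unfolding shadow_def by blast
  have "x \<in> words {0..<k} n" "y \<in> words {0..<k} n"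
    using assms(1,2) x(1) y(1) by blast+
  moreover have "distinguishable (complete_minus_clique k d) x y"
    using assms(3) x(1) y(1) by blast
  ultimately obtain t where "t < n" "x ! t \<noteq> y ! t" "x ! t < d" "y ! t < d"
    using distinguishable_complete_minus_clique_iff by blast
  then show False
    using x(2) y(2) by auto
qed

abbreviation clique_users :: "nat \<Rightarrow> nat \<Rightarrow> nat \<Rightarrow> nat \<Rightarrow> nat \<Rightarrow> bool" where
  "clique_users k d \<equiv> \<lambda>i. if i = 0 then complete_minus_clique k d else (\<lambda>_ _. False)"

lemma feasible_vec_clique_users_bound:
  fixes g :: real
  assumes "1 \<le> d" "d \<le> k" "1 \<le> g" "real d powr g = real k"
    and "feasible_vec {0..<k} (clique_users k d) 2 n m"
  shows "real (m 0) * real (m 1) powr (1 / g) \<le> real d ^ n"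
proof -
  obtain E where E_words: "\<And>a b. a < m 0 \<Longrightarrow> b < m 1 \<Longrightarrow> E a b \<in> words {0..<k} n"
    and E_dist\<^sub>1: "\<And>a a' b b'. a < m 0 \<Longrightarrow> a' < m 0 \<Longrightarrow> b < m 1 \<Longrightarrow> b' < m 1 \<Longrightarrow> a \<noteq> a' \<Longrightarrow>
       distinguishable (complete_minus_clique k d) (E a b) (E a' b')"
    and E_dist\<^sub>2: "\<And>a a' b b'. a < m 0 \<Longrightarrow> a' < m 0 \<Longrightarrow> b < m 1 \<Longrightarrow> b' < m 1 \<Longrightarrow> b \<noteq> b' \<Longrightarrow>
       distinguishable (\<lambda>_ _. False) (E a b) (E a' b')"
    using assms(5) by (elim feasible_vec_2E) auto
  define W where "W a = E a ` {..<m 1}" for a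
  have W_words: "W a \<subseteq> words {0..<k} n" if "a < m 0" for a
    using that E_words unfolding W_def by auto
  have card_W: "card (W a) = m 1" if "a < m 0" for a
  proof -
    have "inj_on (E a) {..<m 1}"
    proof (rule inj_onI, rule ccontr)
      fix b b' assume "b \<in> {..<m 1}" "b' \<in> {..<m 1}" "E a b = E a b'" "b \<noteq> b'"
      then show False
        using E_dist\<^sub>2[of a a b b'] that distinguishable_imp_neq by auto
    qed
    then show ?thesis
      unfolding W_def by (simp add: card_image)
  qed
  have shadow_ge: "real (m 1) powr (1 / g) \<le> real (card (shadow d n (W a)))" if "a < m 0" for a
  proof -
    have "real (m 1) powr (1 / g) \<le> (real (card (shadow d n (W a))) powr g) powr (1 / g)"
      using card_le_card_shadow_powr[OF assms(1-4) W_words[OF that]] card_W[OF that] assms(3)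
      by (intro powr_mono2) auto
    then show ?thesis
      using assms(3) by (simp add: powr_powr)
  qed
  have "real (m 0) * real (m 1) powr (1 / g) \<le> (\<Sum>a<m 0. real (card (shadow d n (W a))))"
    using sum_mono[of "{..<m 0}", OF shadow_ge] by simp
  also have "\<dots> = real (card (\<Union>a<m 0. shadow d n (W a)))"
  proof -
    have "shadow d n (W a) \<inter> shadow d n (W a') = {}" if "a < m 0" "a' < m 0" "a \<noteq> a'" for a a'
      by (rule shadows_disjoint[OF W_words[OF that(1)] W_words[OF that(2)]])
         (use that in \<open>auto simp: W_def intro!: E_dist\<^sub>1\<close>)
    then show ?thesis
      by (subst card_UN_disjoint) (auto simp: finite_shadow)
  qed
  also have "\<dots> \<le> real (card (words {0..<d} n))"
    using shadow_subset_words by (intro of_nat_mono card_mono finite_words) auto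
  also have "\<dots> = real d ^ n"
    by (simp add: card_words)
  finally show ?thesis .
qed

lemma feasible_vec_clique_users_log_bound:
  assumes "2 \<le> d" "d \<le> k" "feasible_vec {0..<k} (clique_users k d) 2 n m"
  shows "log 2 (m 0) + ln d / ln k * log 2 (m 1) \<le> n * log 2 d"
proof -
  define g where "g = ln k / ln d"
  have "0 < ln (real d)" "ln (real d) \<le> ln (real k)"
    using assms(1,2) by simp_all
  then have "1 \<le> g" "real d powr g = real k"
    using assms(1,2) by (simp_all add: g_def powr_def)
  from feasible_vec_clique_users_bound[OF _ assms(2) this assms(3)] assms(1)
  have "real (m 0) * real (m 1) powr (1 / g) \<le> real d ^ n"
    by simp
  moreover have "0 < m 0" "0 < m 1"
    using assms(3) unfolding feasible_vec_def by auto
  ultimately have "log 2 (real (m 0) * real (m 1) powr (1 / g)) \<le> log 2 (real d ^ n)"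
    by (intro log_mono) auto
  with \<open>0 < m 0\<close> \<open>0 < m 1\<close> show ?thesis
    by (simp add: log_mult_pos log_powr log_nat_power g_def)
qed

lemma feasible_vec_clique_users_time_sharing:
  assumes "0 < d" "d \<le> k" "n\<^sub>1 \<le> n"
  shows "feasible_vec {0..<k} (clique_users k d) 2 n (\<lambda>i. if i = 0 then d ^ n\<^sub>1 else k ^ (n - n\<^sub>1))"
proof -
  obtain e\<^sub>1 where e\<^sub>1: "bij_betw e\<^sub>1 {..<d ^ n\<^sub>1} (words {0..<d} n\<^sub>1)"
    using ex_bij_betw_nat_finite[OF finite_words[of "{0..<d}" n\<^sub>1]]
    by (auto simp: card_words atLeast0LessThan)
  obtain e\<^sub>2 where e\<^sub>2: "bij_betw e\<^sub>2 {..<k ^ (n - n\<^sub>1)} (words {0..<k} (n - n\<^sub>1))"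
    using ex_bij_betw_nat_finite[OF finite_words[of "{0..<k}" "n - n\<^sub>1"]]
    by (auto simp: card_words atLeast0LessThan)
  have e\<^sub>1_words: "e\<^sub>1 a \<in> words {0..<d} n\<^sub>1" if "a < d ^ n\<^sub>1" for a
    using bij_betwE[OF e\<^sub>1] that by auto
  have e\<^sub>2_words: "e\<^sub>2 b \<in> words {0..<k} (n - n\<^sub>1)" if "b < k ^ (n - n\<^sub>1)" for b
    using bij_betwE[OF e\<^sub>2] that by auto
  define E where "E a b = e\<^sub>1 a @ e\<^sub>2 b" for a b
  have E_words: "E a b \<in> words {0..<k} n" if "a < d ^ n\<^sub>1" "b < k ^ (n - n\<^sub>1)" for a b
    using e\<^sub>1_words[OF that(1)] e\<^sub>2_words[OF that(2)] words_mono[of "{0..<d}" "{0..<k}"] assms(2,3)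
    by (auto simp: E_def words_def)
  have E_dist\<^sub>1: "distinguishable (complete_minus_clique k d) (E a b) (E a' b')"
    if "a < d ^ n\<^sub>1" "a' < d ^ n\<^sub>1" "a \<noteq> a'" for a a' b b'
    unfolding E_def
  proof (rule distinguishable_append_left)
    show "length (e\<^sub>1 a) = length (e\<^sub>1 a')"
      using e\<^sub>1_words that by (simp add: words_def)
    show "distinguishable (complete_minus_clique k d) (e\<^sub>1 a) (e\<^sub>1 a')"
      using that e\<^sub>1_words bij_betw_imp_inj_on[OF e\<^sub>1] assms(2)
      by (auto intro!: distinguishable_complete_minus_clique_if_neq dest: inj_onD)
  qed
  have E_dist\<^sub>2: "distinguishable (\<lambda>_ _. False) (E a b) (E a' b')"
    if "a < d ^ n\<^sub>1" "a' < d ^ n\<^sub>1" "b < k ^ (n - n\<^sub>1)" "b' < k ^ (n - n\<^sub>1)" "b \<noteq> b'"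
    for a a' b b'
    unfolding E_def
  proof (rule distinguishable_append_right)
    show "length (e\<^sub>1 a) = length (e\<^sub>1 a')"
      using e\<^sub>1_words that by (simp add: words_def)
    show "distinguishable (\<lambda>_ _. False) (e\<^sub>2 b) (e\<^sub>2 b')"
      using that e\<^sub>2_words bij_betw_imp_inj_on[OF e\<^sub>2]
      by (auto simp: distinguishable_never_confused_iff words_def dest: inj_onD)
  qed
  have "0 < k"
    using assms(1,2) by simp
  show ?thesis
    by (rule feasible_vec_2I[where E = E])
       (simp_all add: \<open>0 < d\<close> \<open>0 < k\<close> E_words E_dist\<^sub>1 E_dist\<^sub>2)
qed

section \<open>Rates\<close>

lemma lim_nat_floor_mult_div:
  fixes \<alpha> :: real
  assumes "0 \<le> \<alpha>"
  shows "(\<lambda>j. real (nat \<lfloor>\<alpha> * real j\<rfloor>) / real j) \<longlonglongrightarrow> \<alpha>"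
proof (rule tendsto_sandwich[of "\<lambda>j. \<alpha> - 1 / real j" _ _ "\<lambda>_. \<alpha>"])
  show "(\<lambda>j. \<alpha> - 1 / real j) \<longlonglongrightarrow> \<alpha>"
    using tendsto_diff[OF tendsto_const lim_1_over_n, of \<alpha>] by simp
  have floor_bounds: "\<alpha> * real j - 1 \<le> real (nat \<lfloor>\<alpha> * real j\<rfloor>)"
    "real (nat \<lfloor>\<alpha> * real j\<rfloor>) \<le> \<alpha> * real j" for j
  proof -
    have "real (nat \<lfloor>\<alpha> * real j\<rfloor>) = \<lfloor>\<alpha> * real j\<rfloor>"
      using assms by simp
    then show "\<alpha> * real j - 1 \<le> real (nat \<lfloor>\<alpha> * real j\<rfloor>)"
      "real (nat \<lfloor>\<alpha> * real j\<rfloor>) \<le> \<alpha> * real j"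
      by linarith+
  qed
  show "\<forall>\<^sub>F j in sequentially. \<alpha> - 1 / real j \<le> real (nat \<lfloor>\<alpha> * real j\<rfloor>) / real j"
    using eventually_gt_at_top[of "0::nat"]
  proof (rule eventually_mono)
    fix j :: nat assume "0 < j"
    have "(\<alpha> * real j - 1) / real j \<le> real (nat \<lfloor>\<alpha> * real j\<rfloor>) / real j"
      by (rule divide_right_mono[OF floor_bounds(1)]) simp
    with \<open>0 < j\<close> show "\<alpha> - 1 / real j \<le> real (nat \<lfloor>\<alpha> * real j\<rfloor>) / real j"
      by (simp add: diff_divide_distrib)
  qed
  show "\<forall>\<^sub>F j in sequentially. real (nat \<lfloor>\<alpha> * real j\<rfloor>) / real j \<le> \<alpha>"
    using eventually_gt_at_top[of "0::nat"]
  proof (rule eventually_mono)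
    fix j :: nat assume "0 < j"
    have "real (nat \<lfloor>\<alpha> * real j\<rfloor>) / real j \<le> \<alpha> * real j / real j"
      by (rule divide_right_mono[OF floor_bounds(2)]) simp
    with \<open>0 < j\<close> show "real (nat \<lfloor>\<alpha> * real j\<rfloor>) / real j \<le> \<alpha>"
      by simp
  qed
qed auto

lemma feasible_rate2_time_sharing:
  fixes A B :: nat and \<alpha> :: real
  assumes "\<And>n n\<^sub>1. n\<^sub>1 \<le> n \<Longrightarrow>
      feasible_vec \<Sigma> (\<lambda>i. if i = 0 then G\<^sub>1 else G\<^sub>2) 2 n (\<lambda>i. if i = 0 then A ^ n\<^sub>1 else B ^ (n - n\<^sub>1))"
    and "0 < A" "0 < B" "0 \<le> \<alpha>" "\<alpha> \<le> 1"
  shows "feasible_rate2 \<Sigma> G\<^sub>1 G\<^sub>2 (\<alpha> * log 2 A) ((1 - \<alpha>) * log 2 B)"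
proof -
  define f where "f j = nat \<lfloor>\<alpha> * real j\<rfloor>" for j :: nat
  have f_le: "f j \<le> j" for j
    using mult_left_le_one_le[of "real j" \<alpha>] assms(4,5) unfolding f_def by linarith
  have f_lim: "(\<lambda>j. real (f j) / real j) \<longlonglongrightarrow> \<alpha>"
    unfolding f_def using lim_nat_floor_mult_div assms(4) by simp
  have rate_A: "(\<lambda>j. log 2 (real (A ^ f j)) / real j) \<longlonglongrightarrow> \<alpha> * log 2 A"
    using tendsto_mult_right[OF f_lim, of "log 2 A"] assms(2)
    by (simp add: log_nat_power)
  have "(\<lambda>j. (1 - real (f j) / real j) * log 2 B) \<longlonglongrightarrow> (1 - \<alpha>) * log 2 B"
    by (intro tendsto_intros f_lim)
  then have rate_B: "(\<lambda>j. log 2 (real (B ^ (j - f j))) / real j) \<longlonglongrightarrow> (1 - \<alpha>) * log 2 B"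
  proof (rule Lim_transform_eventually)
    show "\<forall>\<^sub>F j in sequentially.
            (1 - real (f j) / real j) * log 2 B = log 2 (real (B ^ (j - f j))) / real j"
      using eventually_gt_at_top[of "0::nat"]
    proof (rule eventually_mono)
      fix j :: nat assume "0 < j"
      then show "(1 - real (f j) / real j) * log 2 B = log 2 (real (B ^ (j - f j))) / real j"
        using f_le[of j] assms(3) by (simp add: log_nat_power of_nat_diff field_simps)
    qed
  qed
  show ?thesis
    unfolding feasible_rate2_def feasible_rate_def
    using assms(1)[OF f_le] rate_A rate_B
    by (intro exI[of _ "\<lambda>j. j"] exI[of _ "\<lambda>j i. if i = 0 then A ^ f j else B ^ (j - f j)"])
       (auto simp: filterlim_ident less_2_cases_iff)
qed

lemma feasible_rate2_linear_bound:
  fixes c L R\<^sub>1 R\<^sub>2 :: real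
  assumes "\<And>n m. feasible_vec \<Sigma> (\<lambda>i. if i = 0 then G\<^sub>1 else G\<^sub>2) 2 n m \<Longrightarrow>
      log 2 (m 0) + c * log 2 (m 1) \<le> n * L"
    and "feasible_rate2 \<Sigma> G\<^sub>1 G\<^sub>2 R\<^sub>1 R\<^sub>2"
  shows "R\<^sub>1 + c * R\<^sub>2 \<le> L"
proof -
  obtain len :: "nat \<Rightarrow> nat" and M
    where len: "filterlim len at_top sequentially"
      and feasible: "\<And>j. feasible_vec \<Sigma> (\<lambda>i. if i = 0 then G\<^sub>1 else G\<^sub>2) 2 (len j) (M j)"
      and rates: "\<forall>i<2. (\<lambda>j. log 2 (M j i) / len j) \<longlonglongrightarrow> (if i = 0 then R\<^sub>1 else R\<^sub>2)"
    using assms(2) unfolding feasible_rate2_def feasible_rate_def by blast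
  have "(\<lambda>j. log 2 (M j 0) / len j + c * (log 2 (M j 1) / len j)) \<longlonglongrightarrow> R\<^sub>1 + c * R\<^sub>2"
    using rates[rule_format, of 0] rates[rule_format, of 1] by (intro tendsto_intros) auto
  moreover have "\<forall>\<^sub>F j in sequentially. log 2 (M j 0) / len j + c * (log 2 (M j 1) / len j) \<le> L"
    using len unfolding filterlim_at_top
  proof (elim allE[of _ 1] eventually_mono)
    fix j assume "1 \<le> len j"
    with assms(1)[OF feasible] show "log 2 (M j 0) / len j + c * (log 2 (M j 1) / len j) \<le> L"
      by (simp add: add_divide_distrib[symmetric] divide_le_eq mult.commute)
  qed
  ultimately show ?thesis
    by (rule tendsto_upperbound) simp
qed

lemma optimal2_if_supporting_line:
  fixes c :: real
  assumes "feasible_rate2 \<Sigma> G\<^sub>1 G\<^sub>2 R\<^sub>1 R\<^sub>2"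
    and "\<And>R\<^sub>1' R\<^sub>2'. feasible_rate2 \<Sigma> G\<^sub>1 G\<^sub>2 R\<^sub>1' R\<^sub>2' \<Longrightarrow> R\<^sub>1' + c * R\<^sub>2' \<le> R\<^sub>1 + c * R\<^sub>2"
    and "0 < c"
  shows "optimal2 \<Sigma> G\<^sub>1 G\<^sub>2 R\<^sub>1 R\<^sub>2"
proof -
  have "R\<^sub>1' \<le> R\<^sub>1" if "feasible_rate2 \<Sigma> G\<^sub>1 G\<^sub>2 R\<^sub>1' R\<^sub>2" for R\<^sub>1'
    using assms(2)[OF that] by simp
  moreover have "R\<^sub>2' \<le> R\<^sub>2" if "feasible_rate2 \<Sigma> G\<^sub>1 G\<^sub>2 R\<^sub>1 R\<^sub>2'" for R\<^sub>2'
    using assms(2)[OF that] assms(3) by simp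
  ultimately show ?thesis
    unfolding optimal2_def using assms(1) by (meson not_less)
qed

theorem theorem7:
  fixes d k :: nat and \<alpha> :: real
  assumes "2 \<le> d" and "d \<le> k" and "0 \<le> \<alpha>" and "\<alpha> \<le> 1"
  shows "optimal2 {0..<k}
           (\<lambda>a b. a \<in> {0..<k} \<and> b \<in> {0..<k} \<and> a \<noteq> b \<and> (a \<notin> {0..<d} \<or> b \<notin> {0..<d}))
           (\<lambda>a b. False)
           (\<alpha> * log 2 d) ((1 - \<alpha>) * log 2 k)"
proof -
  have G: "(\<lambda>a b. a \<in> {0..<k} \<and> b \<in> {0..<k} \<and> a \<noteq> b \<and> (a \<notin> {0..<d} \<or> b \<notin> {0..<d}))
           = complete_minus_clique k d"
    by (auto simp: fun_eq_iff complete_minus_clique_def)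
  have "0 < ln d / ln k" and slope: "ln d / ln k * ((1 - \<alpha>) * log 2 k) = log 2 d - \<alpha> * log 2 d"
    using assms(1,2) by (simp_all add: log_def field_simps)
  show ?thesis
    unfolding G
  proof (rule optimal2_if_supporting_line[where c = "ln d / ln k"])
    show "feasible_rate2 {0..<k} (complete_minus_clique k d) (\<lambda>_ _. False)
            (\<alpha> * log 2 d) ((1 - \<alpha>) * log 2 k)"
      using assms by (intro feasible_rate2_time_sharing feasible_vec_clique_users_time_sharing) auto
    show "R\<^sub>1 + ln d / ln k * R\<^sub>2 \<le> \<alpha> * log 2 d + ln d / ln k * ((1 - \<alpha>) * log 2 k)"
      if "feasible_rate2 {0..<k} (complete_minus_clique k d) (\<lambda>_ _. False) R\<^sub>1 R\<^sub>2" for R\<^sub>1 R\<^sub>2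
      using feasible_rate2_linear_bound[OF feasible_vec_clique_users_log_bound[OF assms(1,2)] that]
        slope by linarith
  qed fact
qed

end
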